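(* Let $A$ be an AUF algebra and let $\psi\in\mathrm{SLF}(A)$ be non-degenerate. Let $M\in\mathrm{Coh}_{\mathrm L}(A)$ be projective as a left $A$-module, and let $B=\mathrm{End}_{A,-}(M)^{\mathrm{op}}$. Then the right pseudotrace ${}^\psi\mathrm{Tr}\in\mathrm{SLF}(B)$ associated to $\psi$ and the $A$-$B$ bimodule $M$ is non-degenerate.
   Context: All algebras are associative $\mathbb C$-algebras, not necessarily unital. An idempotent is $e$ with $e^2=e$. An algebra $A$ is AUF if there is a family $(e_i)_{i\in\mathfrak I}$ of mutually orthogonal idempotents with $\dim e_iAe_j<\infty$ and $A=\sum_{i,j}e_iAe_j$. A left $A$-module $M$ is quasicoherent if $\xi\in A\xi$ for all $\xi\in M$, coherent if moreover finitely generated; $\mathrm{Coh}_{\mathrm L}(A)$ is the category of coherent left $A$-modules. $B=\mathrm{End}_{A,-}(M)^{\mathrm{op}}$ acts on $M$ on the right by $\xi\cdot T=T(\xi)$. $\mathrm{SLF}(C)$ is the space of linear $\phi:C\to\mathbb C$ with $\phi(xy)=\phi(yx)$; $\phi$ is non-degenerate if $\{x\in C:\phi(xy)=0\ \forall y\in C\}=0$. Right pseudotrace: choose an idempotent $e\in A$ and finitely many left $A$-module maps $\beta_j:Ae\to M$, $\check\beta^j:M\to Ae$ with $\sum_j\beta_j\circ\check\beta^j=\mathrm{id}_M$ (these exist since $M$ is coherent and projective); then ${}^\psi\mathrm{Tr}(y)=\sum_j\psi(\check\beta^j(\beta_j(e)y))$ for $y\in B$, independent of choices. *)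

theory Defs
  imports Complex_Main
begin

definition c_algebra :: "(complex \<Rightarrow> 'a::ring \<Rightarrow> 'a) \<Rightarrow> bool" where
  "c_algebra sA \<longleftrightarrow> vector_space sA \<and>
     (\<forall>c x y. sA c (x * y) = sA c x * y \<and> sA c (x * y) = x * sA c y)"

definition idempotent :: "'a::ring \<Rightarrow> bool" where
  "idempotent e \<longleftrightarrow> e * e = e"

definition AUF :: "(complex \<Rightarrow> 'a::ring \<Rightarrow> 'a) \<Rightarrow> bool" where
  "AUF sA \<longleftrightarrow> c_algebra sA \<and>
    (\<exists>(I::'a set) (e::'a \<Rightarrow> 'a).
       (\<forall>i\<in>I. idempotent (e i)) \<and>
       (\<forall>i\<in>I. \<forall>j\<in>I. i \<noteq> j \<longrightarrow> e i * e j = 0) \<and>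
       (\<forall>i\<in>I. \<forall>j\<in>I. \<exists>F. finite F \<and> F \<subseteq> {e i * x * e j | x. True} \<and>
            module.span sA F = {e i * x * e j | x. True}) \<and>
       UNIV = module.span sA (\<Union>i\<in>I. \<Union>j\<in>I. {e i * x * e j | x. True}))"

definition SLF :: "(complex \<Rightarrow> 'a::ring \<Rightarrow> 'a) \<Rightarrow> ('a \<Rightarrow> complex) \<Rightarrow> bool" where
  "SLF sA \<phi> \<longleftrightarrow> Vector_Spaces.linear sA (*) \<phi> \<and> (\<forall>x y. \<phi> (x * y) = \<phi> (y * x))"

definition nondegenerate_on :: "'c set \<Rightarrow> ('c \<Rightarrow> 'c \<Rightarrow> 'c) \<Rightarrow> 'c \<Rightarrow> ('c \<Rightarrow> complex) \<Rightarrow> bool" where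
  "nondegenerate_on C mult z \<phi> \<longleftrightarrow> (\<forall>x\<in>C. (\<forall>y\<in>C. \<phi> (mult x y) = 0) \<longrightarrow> x = z)"

definition left_module ::
  "(complex \<Rightarrow> 'a::ring \<Rightarrow> 'a) \<Rightarrow> (complex \<Rightarrow> 'm::ab_group_add \<Rightarrow> 'm) \<Rightarrow> ('a \<Rightarrow> 'm \<Rightarrow> 'm) \<Rightarrow> bool" where
  "left_module sA sM act \<longleftrightarrow> c_algebra sA \<and> vector_space sM \<and>
     (\<forall>a b x. act (a * b) x = act a (act b x)) \<and>
     (\<forall>a b x. act (a + b) x = act a x + act b x) \<and>
     (\<forall>a x y. act a (x + y) = act a x + act a y) \<and>
     (\<forall>c a x. act (sA c a) x = sM c (act a x) \<and> act a (sM c x) = sM c (act a x))"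

definition quasicoherent :: "('a \<Rightarrow> 'm \<Rightarrow> 'm) \<Rightarrow> bool" where
  "quasicoherent act \<longleftrightarrow> (\<forall>\<xi>. \<exists>a. \<xi> = act a \<xi>)"

definition submodule ::
  "(complex \<Rightarrow> 'm::ab_group_add \<Rightarrow> 'm) \<Rightarrow> ('a \<Rightarrow> 'm \<Rightarrow> 'm) \<Rightarrow> 'm set \<Rightarrow> bool" where
  "submodule sM act N \<longleftrightarrow> 0 \<in> N \<and> (\<forall>x\<in>N. \<forall>y\<in>N. x + y \<in> N) \<and>
     (\<forall>c. \<forall>x\<in>N. sM c x \<in> N) \<and> (\<forall>a. \<forall>x\<in>N. act a x \<in> N)"

definition finitely_generated ::
  "(complex \<Rightarrow> 'm::ab_group_add \<Rightarrow> 'm) \<Rightarrow> ('a \<Rightarrow> 'm \<Rightarrow> 'm) \<Rightarrow> bool" where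
  "finitely_generated sM act \<longleftrightarrow>
     (\<exists>G. finite G \<and> (\<forall>N. submodule sM act N \<and> G \<subseteq> N \<longrightarrow> N = UNIV))"

definition coherent ::
  "(complex \<Rightarrow> 'm::ab_group_add \<Rightarrow> 'm) \<Rightarrow> ('a \<Rightarrow> 'm \<Rightarrow> 'm) \<Rightarrow> bool" where
  "coherent sM act \<longleftrightarrow> quasicoherent act \<and> finitely_generated sM act"

definition module_map ::
  "(complex \<Rightarrow> 'm::ab_group_add \<Rightarrow> 'm) \<Rightarrow> ('a \<Rightarrow> 'm \<Rightarrow> 'm) \<Rightarrow>
   (complex \<Rightarrow> 'n::ab_group_add \<Rightarrow> 'n) \<Rightarrow> ('a \<Rightarrow> 'n \<Rightarrow> 'n) \<Rightarrow> ('m \<Rightarrow> 'n) \<Rightarrow> bool" where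
  "module_map sM actM sN actN T \<longleftrightarrow>
     (\<forall>x y. T (x + y) = T x + T y) \<and> (\<forall>c x. T (sM c x) = sN c (T x)) \<and>
     (\<forall>a x. T (actM a x) = actN a (T x))"

text \<open>End_{A,-}(M): the A-module endomorphisms of M.  In B = End(M)^op the product
is S \<cdot> T = T \<circ> S (so that the right action \<xi> \<cdot> T = T \<xi> is a right action).\<close>

definition End_A :: "(complex \<Rightarrow> 'm::ab_group_add \<Rightarrow> 'm) \<Rightarrow> ('a \<Rightarrow> 'm \<Rightarrow> 'm) \<Rightarrow> ('m \<Rightarrow> 'm) set" where
  "End_A sM act = {T. module_map sM act sM act T}"

definition op_mult :: "('m \<Rightarrow> 'm) \<Rightarrow> ('m \<Rightarrow> 'm) \<Rightarrow> ('m \<Rightarrow> 'm)" where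
  "op_mult S T = T \<circ> S"

record ('a, 'n) amodule =
  mcarrier :: "'n set"
  madd :: "'n \<Rightarrow> 'n \<Rightarrow> 'n"
  mzero :: 'n
  mscale :: "complex \<Rightarrow> 'n \<Rightarrow> 'n"
  mact :: "'a \<Rightarrow> 'n \<Rightarrow> 'n"

definition is_amodule :: "(complex \<Rightarrow> 'a::ring \<Rightarrow> 'a) \<Rightarrow> ('a, 'n) amodule \<Rightarrow> bool" where
  "is_amodule sA N \<longleftrightarrow>
    (let S = mcarrier N; ad = madd N; z = mzero N; sc = mscale N; ac = mact N in
      z \<in> S \<and> (\<forall>x\<in>S. \<forall>y\<in>S. ad x y \<in> S) \<and> (\<forall>c. \<forall>x\<in>S. sc c x \<in> S) \<and>
      (\<forall>a. \<forall>x\<in>S. ac a x \<in> S) \<and>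
      (\<forall>x\<in>S. \<forall>y\<in>S. \<forall>w\<in>S. ad (ad x y) w = ad x (ad y w)) \<and>
      (\<forall>x\<in>S. \<forall>y\<in>S. ad x y = ad y x) \<and>
      (\<forall>x\<in>S. ad z x = x) \<and> (\<forall>x\<in>S. \<exists>y\<in>S. ad x y = z) \<and>
      (\<forall>c. \<forall>x\<in>S. \<forall>y\<in>S. sc c (ad x y) = ad (sc c x) (sc c y)) \<and>
      (\<forall>c d. \<forall>x\<in>S. sc (c + d) x = ad (sc c x) (sc d x)) \<and>
      (\<forall>c d. \<forall>x\<in>S. sc (c * d) x = sc c (sc d x)) \<and>
      (\<forall>x\<in>S. sc 1 x = x) \<and>
      (\<forall>a. \<forall>x\<in>S. \<forall>y\<in>S. ac a (ad x y) = ad (ac a x) (ac a y)) \<and>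
      (\<forall>a b. \<forall>x\<in>S. ac (a + b) x = ad (ac a x) (ac b x)) \<and>
      (\<forall>a b. \<forall>x\<in>S. ac (a * b) x = ac a (ac b x)) \<and>
      (\<forall>c a. \<forall>x\<in>S. ac (sA c a) x = sc c (ac a x) \<and> ac a (sc c x) = sc c (ac a x)))"

definition amodule_hom :: "('a, 'n) amodule \<Rightarrow> ('a, 'k) amodule \<Rightarrow> ('n \<Rightarrow> 'k) \<Rightarrow> bool" where
  "amodule_hom N K f \<longleftrightarrow>
     (\<forall>x\<in>mcarrier N. f x \<in> mcarrier K) \<and>
     (\<forall>x\<in>mcarrier N. \<forall>y\<in>mcarrier N. f (madd N x y) = madd K (f x) (f y)) \<and>
     (\<forall>c. \<forall>x\<in>mcarrier N. f (mscale N c x) = mscale K c (f x)) \<and>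
     (\<forall>a. \<forall>x\<in>mcarrier N. f (mact N a x) = mact K a (f x))"

definition type_module :: "(complex \<Rightarrow> 'm::ab_group_add \<Rightarrow> 'm) \<Rightarrow> ('a \<Rightarrow> 'm \<Rightarrow> 'm) \<Rightarrow> ('a, 'm) amodule" where
  "type_module sM act = \<lparr>mcarrier = UNIV, madd = (+), mzero = 0, mscale = sM, mact = act\<rparr>"

text \<open>HOL cannot quantify over all types inside a formula, so the test modules range over all
A-modules whose carrier is a subset of the type 'm => 'a * complex; this type is large
enough to contain (a copy of) M and the free unitization-module on the set M, so the
property is equivalent to projectivity in the category of all left A-modules.\<close>

definition projective_module ::
  "(complex \<Rightarrow> 'a::ring \<Rightarrow> 'a) \<Rightarrow> (complex \<Rightarrow> 'm::ab_group_add \<Rightarrow> 'm) \<Rightarrow> ('a \<Rightarrow> 'm \<Rightarrow> 'm) \<Rightarrow> bool" where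
  "projective_module sA sM act \<longleftrightarrow>
     (\<forall>(N :: ('a, 'm \<Rightarrow> 'a \<times> complex) amodule) (N' :: ('a, 'm \<Rightarrow> 'a \<times> complex) amodule) p f.
        is_amodule sA N \<and> is_amodule sA N' \<and> amodule_hom N N' p \<and>
        p ` mcarrier N = mcarrier N' \<and> amodule_hom (type_module sM act) N' f \<longrightarrow>
        (\<exists>g. amodule_hom (type_module sM act) N g \<and> (\<forall>\<xi>. p (g \<xi>) = f \<xi>)))"

definition pseudotrace_data ::
  "(complex \<Rightarrow> 'a::ring \<Rightarrow> 'a) \<Rightarrow> (complex \<Rightarrow> 'm::ab_group_add \<Rightarrow> 'm) \<Rightarrow> ('a \<Rightarrow> 'm \<Rightarrow> 'm) \<Rightarrow>
   'a \<Rightarrow> nat \<Rightarrow> (nat \<Rightarrow> 'a \<Rightarrow> 'm) \<Rightarrow> (nat \<Rightarrow> 'm \<Rightarrow> 'a) \<Rightarrow> bool" where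
  "pseudotrace_data sA sM act e n beta betac \<longleftrightarrow>
     idempotent e \<and>
     (\<forall>j<n.
        (\<forall>x\<in>{a * e | a. True}. \<forall>y\<in>{a * e | a. True}. beta j (x + y) = beta j x + beta j y) \<and>
        (\<forall>c. \<forall>x\<in>{a * e | a. True}. beta j (sA c x) = sM c (beta j x)) \<and>
        (\<forall>a. \<forall>x\<in>{a * e | a. True}. beta j (a * x) = act a (beta j x))) \<and>
     (\<forall>j<n.
        (\<forall>\<xi>. betac j \<xi> \<in> {a * e | a. True}) \<and>
        module_map sM act sA (*) (betac j)) \<and>
     (\<forall>\<xi>. (\<Sum>j<n. beta j (betac j \<xi>)) = \<xi>)"

definition right_pseudotrace ::
  "('a \<Rightarrow> complex) \<Rightarrow> 'a \<Rightarrow> nat \<Rightarrow> (nat \<Rightarrow> 'a \<Rightarrow> 'm) \<Rightarrow> (nat \<Rightarrow> 'm \<Rightarrow> 'a) \<Rightarrow> ('m \<Rightarrow> 'm) \<Rightarrow> complex" where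
  "right_pseudotrace \<psi> e n beta betac y = (\<Sum>j<n. \<psi> (betac j (y (beta j e))))"

end

theory Submission
  imports Defs
begin

text \<open>
  For \<open>i < n\<close> and \<open>m \<in> M\<close> let \<open>T\<close> be the endomorphism \<open>\<xi> \<mapsto> betac i \<xi> \<cdot> m\<close>.
  Expanding \<open>\<xi> = \<Sum>j. beta j (betac j \<xi>)\<close> and using the symmetry of \<open>\<psi>\<close> one finds
  \<open>Tr(x \<cdot> T) = \<psi>(betac i (x m))\<close>. If \<open>x\<close> lies in the radical of \<open>Tr\<close>, taking
  \<open>m = c \<cdot> m'\<close> gives \<open>\<psi>(c \<cdot> betac i (x m')) = 0\<close> for all \<open>c\<close>, so \<open>betac i (x m') = 0\<close> by
  non-degeneracy of \<open>\<psi>\<close>, and then \<open>x m' = \<Sum>i. beta i (betac i (x m')) = 0\<close>.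
  Only the splitting data enter the argument; AUF, coherence and projectivity merely
  guarantee that such data exist.
\<close>


lemma SLF_add:
  assumes "SLF sA \<psi>"
  shows "\<psi> (u + v) = \<psi> u + \<psi> v"
  using assms unfolding SLF_def Vector_Spaces.linear_iff by blast

lemma SLF_commute:
  assumes "SLF sA \<psi>"
  shows "\<psi> (u * v) = \<psi> (v * u)"
  using assms unfolding SLF_def by blast

lemma SLF_nondegenerate_left:
  assumes "SLF sA \<psi>" and "nondegenerate_on UNIV (*) 0 \<psi>"
    and "\<And>c. \<psi> (c * u) = 0"
  shows "u = 0"
proof -
  have "\<psi> (u * c) = 0" for c
    using assms(3)[of c] SLF_commute[OF assms(1)] by simp
  then show ?thesis
    using assms(2) unfolding nondegenerate_on_def by blast
qed

lemma End_A_add: "x \<in> End_A sM act \<Longrightarrow> x (u + v) = x u + x v"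
  and End_A_act: "x \<in> End_A sM act \<Longrightarrow> x (act a u) = act a (x u)"
  unfolding End_A_def module_map_def by blast+

locale pseudotrace_setting =
  fixes sA :: "complex \<Rightarrow> 'a::ring \<Rightarrow> 'a"
    and sM :: "complex \<Rightarrow> 'm::ab_group_add \<Rightarrow> 'm"
    and act :: "'a \<Rightarrow> 'm \<Rightarrow> 'm"
    and e :: 'a and n :: nat
    and beta :: "nat \<Rightarrow> 'a \<Rightarrow> 'm" and betac :: "nat \<Rightarrow> 'm \<Rightarrow> 'a"
  assumes left_module: "left_module sA sM act"
    and data: "pseudotrace_data sA sM act e n beta betac"
begin

lemma act_mult: "act (a * b) m = act a (act b m)"
  and act_add_left: "act (a + b) m = act a m + act b m"
  and act_scale: "act (sA c a) m = sM c (act a m)"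
  using left_module unfolding left_module_def by blast+

lemma act_zero_left: "act 0 m = 0"
  using act_add_left[of 0 0] by simp

lemma betac_add: "i < n \<Longrightarrow> betac i (u + v) = betac i u + betac i v"
  and betac_scale: "i < n \<Longrightarrow> betac i (sM c u) = sA c (betac i u)"
  and betac_act: "i < n \<Longrightarrow> betac i (act a u) = a * betac i u"
  using data unfolding pseudotrace_data_def module_map_def by blast+

lemma sum_beta_betac: "(\<Sum>j<n. beta j (betac j \<xi>)) = \<xi>"
  using data unfolding pseudotrace_data_def by blast

lemma idempotent_e: "e * e = e"
  using data unfolding pseudotrace_data_def idempotent_def by blast

lemma beta_mult_e:
  assumes "j < n"
  shows "beta j (a * e) = act a (beta j e)"
proof -
  have "e \<in> {a * e | a. True}"
    using idempotent_e by (metis (mono_tags) mem_Collect_eq)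
  with assms data show ?thesis unfolding pseudotrace_data_def by blast
qed

lemma beta_zero: "j < n \<Longrightarrow> beta j 0 = 0"
  using beta_mult_e[of j 0] by (simp add: act_zero_left)

lemma beta_betac:
  assumes "j < n"
  shows "beta j (betac j \<xi>) = act (betac j \<xi>) (beta j e)"
proof -
  obtain a where "betac j \<xi> = a * e"
    using assms data unfolding pseudotrace_data_def by blast
  then have "betac j \<xi> * e = betac j \<xi>" by (simp add: mult.assoc idempotent_e)
  then show ?thesis using beta_mult_e[OF assms] by metis
qed

lemma eq_zero_if_betac_eq_zero:
  assumes "\<And>i. i < n \<Longrightarrow> betac i \<xi> = 0"
  shows "\<xi> = 0"
proof -
  have "\<xi> = (\<Sum>i<n. beta i (betac i \<xi>))" by (simp add: sum_beta_betac)
  also have "\<dots> = 0" by (simp add: assms beta_zero)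
  finally show ?thesis .
qed

lemma rank_one_in_End_A:
  assumes "i < n"
  shows "(\<lambda>\<xi>. act (betac i \<xi>) m) \<in> End_A sM act"
  unfolding End_A_def module_map_def
proof (intro CollectI conjI allI)
  fix u v
  show "act (betac i (u + v)) m = act (betac i u) m + act (betac i v) m"
    by (simp only: betac_add[OF assms] act_add_left)
next
  fix c u
  show "act (betac i (sM c u)) m = sM c (act (betac i u) m)"
    by (simp only: betac_scale[OF assms] act_scale)
next
  fix a u
  show "act (betac i (act a u)) m = act a (act (betac i u) m)"
    by (simp only: betac_act[OF assms] act_mult)
qed

lemma right_pseudotrace_op_mult_rank_one:
  assumes "SLF sA \<psi>" and "x \<in> End_A sM act" and "i < n"
  shows "right_pseudotrace \<psi> e n beta betac (op_mult x (\<lambda>\<xi>. act (betac i \<xi>) m))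
           = \<psi> (betac i (x m))"
proof -
  have "additive (\<lambda>u. \<psi> (betac i (x u)))"
    by (rule additive.intro)
      (simp add: End_A_add[OF assms(2)] betac_add[OF assms(3)] SLF_add[OF assms(1)])
  note psi_betac_x_sum = additive.sum[OF this]
  have term_j: "\<psi> (betac j (act (betac i (x (beta j e))) m))
                  = \<psi> (betac i (x (beta j (betac j m))))" if "j < n" for j
  proof -
    have "\<psi> (betac j (act (betac i (x (beta j e))) m)) = \<psi> (betac i (x (beta j e)) * betac j m)"
      by (simp add: betac_act that)
    also have "\<dots> = \<psi> (betac j m * betac i (x (beta j e)))"
      by (rule SLF_commute[OF assms(1)])
    also have "\<dots> = \<psi> (betac i (x (act (betac j m) (beta j e))))"
      by (simp add: End_A_act[OF assms(2)] betac_act assms(3))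
    finally show ?thesis by (simp add: beta_betac that)
  qed
  have "right_pseudotrace \<psi> e n beta betac (op_mult x (\<lambda>\<xi>. act (betac i \<xi>) m))
          = (\<Sum>j<n. \<psi> (betac i (x (beta j (betac j m)))))"
    unfolding right_pseudotrace_def op_mult_def by (simp add: term_j)
  also have "\<dots> = \<psi> (betac i (x m))"
    by (simp add: psi_betac_x_sum[symmetric] sum_beta_betac)
  finally show ?thesis .
qed

end

theorem proposition10p3:
  fixes sA :: "complex \<Rightarrow> 'a::ring \<Rightarrow> 'a"
    and sM :: "complex \<Rightarrow> 'm::ab_group_add \<Rightarrow> 'm"
    and act :: "'a \<Rightarrow> 'm \<Rightarrow> 'm"
    and \<psi> :: "'a \<Rightarrow> complex"
    and e :: 'a and n :: nat
    and beta :: "nat \<Rightarrow> 'a \<Rightarrow> 'm" and betac :: "nat \<Rightarrow> 'm \<Rightarrow> 'a"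
  assumes "AUF sA"
    and "SLF sA \<psi>"
    and "nondegenerate_on UNIV (*) 0 \<psi>"
    and "left_module sA sM act"
    and "coherent sM act"
    and "projective_module sA sM act"
    and "pseudotrace_data sA sM act e n beta betac"
  shows "nondegenerate_on (End_A sM act) op_mult (\<lambda>_. 0)
           (right_pseudotrace \<psi> e n beta betac)"
  unfolding nondegenerate_on_def
proof (intro ballI impI)
  interpret pseudotrace_setting sA sM act e n beta betac
    using assms(4,7) by unfold_locales
  fix x assume x: "x \<in> End_A sM act"
    and radical: "\<forall>y\<in>End_A sM act. right_pseudotrace \<psi> e n beta betac (op_mult x y) = 0"
  have "\<psi> (betac i (x m)) = 0" if "i < n" for i m
  proof -
    have "\<psi> (betac i (x m))
            = right_pseudotrace \<psi> e n beta betac (op_mult x (\<lambda>\<xi>. act (betac i \<xi>) m))"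
      by (simp add: right_pseudotrace_op_mult_rank_one[OF assms(2) x that])
    also have "\<dots> = 0"
      using radical rank_one_in_End_A[OF that] by blast
    finally show ?thesis .
  qed
  then have "\<psi> (c * betac i (x m)) = 0" if "i < n" for i m c
    using that by (metis End_A_act[OF x] betac_act)
  then have "betac i (x m) = 0" if "i < n" for i m
    using SLF_nondegenerate_left[OF assms(2,3)] that by blast
  then show "x = (\<lambda>_. 0)"
    using eq_zero_if_betac_eq_zero by blast
qed

end
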